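(* Let $M$ be a $3$-connected simple matroid with $r(M)\ge 4$, and let $K=x_1,\dots,x_n,y_1,\dots,y_n$ ($n\ge3$) be a carambole of $M$ with filament $L=\{y_1,\dots,y_n\}$ and hull $X=\{x_1,\dots,x_n\}$. Let $C$ be a circuit of $M$ with $C\not\subseteq L$. Then: (a) If $C$ meets $\{x_1,\dots,x_n,y_1,\dots,y_n\}$, then either (a.1) $X\subseteq C$ and $(C-L)\cup A$ is a circuit of $M$ for each $2$-element subset $A$ of $L$; or (a.2) for some $l\in\{1,\dots,n\}$, $X-C=\{x_l\}$, $(C-L)\cup y_l$ is a circuit of $M$, and $(C-L)\cup A$ is a circuit of $M$ for each $2$-element subset $A$ of $L-y_l$. (b) $C-L$ is a circuit of $M/L$.
   Context: A line of $M$ is a rank-$2$ set. For $n\ge3$, a sequence $x_1,\dots,x_n,y_1,\dots,y_n$ of elements of $M$ is a carambole of $M$ if $L:=\{y_1,\dots,y_n\}$ is a line of $M$ with $n$ distinct elements such that $\mathrm{si}(M/L)$ (the simplification) is $3$-connected, and, for each $i$, $(L-y_i)\cup x_i$ is a cocircuit of $M$. $L$ is the filament and $X:=\{x_1,\dots,x_n\}$ the hull of the carambole. *)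

theory Defs
  imports Main
begin

record 'a matroid =
  ground :: "'a set"
  indep :: "'a set \<Rightarrow> bool"

definition matroid :: "'a matroid \<Rightarrow> bool" where
  "matroid M \<longleftrightarrow>
     finite (ground M) \<and>
     indep M {} \<and>
     (\<forall>I. indep M I \<longrightarrow> I \<subseteq> ground M) \<and>
     (\<forall>I J. indep M J \<and> I \<subseteq> J \<longrightarrow> indep M I) \<and>
     (\<forall>I J. indep M I \<and> indep M J \<and> card I < card J \<longrightarrow>
        (\<exists>e \<in> J - I. indep M (insert e I)))"

definition rank :: "'a matroid \<Rightarrow> 'a set \<Rightarrow> nat" where
  "rank M X = Max (card ` {I. I \<subseteq> X \<and> indep M I})"

abbreviation matroid_rank :: "'a matroid \<Rightarrow> nat" where
  "matroid_rank M \<equiv> rank M (ground M)"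

definition basis :: "'a matroid \<Rightarrow> 'a set \<Rightarrow> bool" where
  "basis M B \<longleftrightarrow> indep M B \<and> (\<forall>I. indep M I \<and> B \<subseteq> I \<longrightarrow> I = B)"

definition circuit :: "'a matroid \<Rightarrow> 'a set \<Rightarrow> bool" where
  "circuit M C \<longleftrightarrow> C \<subseteq> ground M \<and> \<not> indep M C \<and> (\<forall>e \<in> C. indep M (C - {e}))"

definition dual :: "'a matroid \<Rightarrow> 'a matroid" where
  "dual M = \<lparr>ground = ground M,
             indep = (\<lambda>I. I \<subseteq> ground M \<and> (\<exists>B. basis M B \<and> I \<inter> B = {}))\<rparr>"

definition cocircuit :: "'a matroid \<Rightarrow> 'a set \<Rightarrow> bool" where
  "cocircuit M D \<longleftrightarrow> circuit (dual M) D"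

text \<open>Contraction M/L, via the rank function r_{M/L}(X) = r(X \<union> L) - r(L).\<close>
definition contract :: "'a matroid \<Rightarrow> 'a set \<Rightarrow> 'a matroid" where
  "contract M L = \<lparr>ground = ground M - L,
     indep = (\<lambda>I. I \<subseteq> ground M - L \<and> rank M (I \<union> L) = card I + rank M L)\<rparr>"

definition restrict :: "'a matroid \<Rightarrow> 'a set \<Rightarrow> 'a matroid" where
  "restrict M S = \<lparr>ground = S, indep = (\<lambda>I. indep M I \<and> I \<subseteq> S)\<rparr>"

definition loop :: "'a matroid \<Rightarrow> 'a \<Rightarrow> bool" where
  "loop M e \<longleftrightarrow> circuit M {e}"

definition parallel :: "'a matroid \<Rightarrow> 'a \<Rightarrow> 'a \<Rightarrow> bool" where
  "parallel M e f \<longleftrightarrow> e \<noteq> f \<and> circuit M {e, f}"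

text \<open>Simple: no loops and no parallel pairs, i.e. every circuit has at least 3 elements.\<close>
definition simple :: "'a matroid \<Rightarrow> bool" where
  "simple M \<longleftrightarrow> (\<forall>C. circuit M C \<longrightarrow> card C \<ge> 3)"

definition simplification_set :: "'a matroid \<Rightarrow> 'a set \<Rightarrow> bool" where
  "simplification_set M S \<longleftrightarrow>
     S \<subseteq> ground M \<and>
     (\<forall>e \<in> S. \<not> loop M e) \<and>
     (\<forall>e \<in> S. \<forall>f \<in> S. \<not> parallel M e f) \<and>
     (\<forall>e \<in> ground M. \<not> loop M e \<longrightarrow> e \<in> S \<or> (\<exists>f \<in> S. parallel M e f))"

definition conn :: "'a matroid \<Rightarrow> 'a set \<Rightarrow> nat" where
  "conn M X = rank M X + rank M (ground M - X) - matroid_rank M"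

definition separation :: "'a matroid \<Rightarrow> nat \<Rightarrow> 'a set \<Rightarrow> bool" where
  "separation M k X \<longleftrightarrow> X \<subseteq> ground M \<and> card X \<ge> k \<and> card (ground M - X) \<ge> k
                          \<and> conn M X < k"

definition three_connected :: "'a matroid \<Rightarrow> bool" where
  "three_connected M \<longleftrightarrow> (\<forall>k X. 1 \<le> k \<and> k < 3 \<longrightarrow> \<not> separation M k X)"

text \<open>si(N) is 3-connected (independent of the choice of simplification).\<close>
definition si_three_connected :: "'a matroid \<Rightarrow> bool" where
  "si_three_connected N \<longleftrightarrow>
     (\<exists>S. simplification_set N S \<and> three_connected (restrict N S))"

definition line :: "'a matroid \<Rightarrow> 'a set \<Rightarrow> bool" where
  "line M L \<longleftrightarrow> L \<subseteq> ground M \<and> rank M L = 2"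

definition carambole :: "'a matroid \<Rightarrow> nat \<Rightarrow> (nat \<Rightarrow> 'a) \<Rightarrow> (nat \<Rightarrow> 'a) \<Rightarrow> bool" where
  "carambole M n x y \<longleftrightarrow>
     n \<ge> 3 \<and>
     (\<forall>i \<in> {1..n}. x i \<in> ground M \<and> y i \<in> ground M) \<and>
     inj_on y {1..n} \<and>
     line M (y ` {1..n}) \<and>
     si_three_connected (contract M (y ` {1..n})) \<and>
     (\<forall>i \<in> {1..n}. cocircuit M ((y ` {1..n} - {y i}) \<union> {x i}))"

end

theory Submission
  imports Defs
begin

text \<open>Write L for the filament and C' = C - L. Since C \<inter> L is a proper subset of C it is
  independent, and submodularity gives r(C' \<union> L) < |C'| + r(L). Conversely, for e \<in> C' the set
  C' - e together with two points of L covering C \<inter> L is independent: a circuit inside it would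
  have to contain a point y_j outside C, and the cocircuit (L - y_i) \<union> x_i of the other point then
  meets it in y_j alone. Hence C' is a circuit of M/L, which is (b). If C meets X \<union> L it meets L
  (orthogonality again), so C' is independent in M, and lifting the circuit C' of M/L through any
  two points p, q of L yields a circuit C' \<union> A of M with \<emptyset> \<noteq> A \<subseteq> {p, q}. Orthogonality with the
  cocircuits (L - y_i) \<union> x_i decides which A occur and gives (a). That the hull avoids L is where
  3-connectivity and r(M) \<ge> 4 enter: a cocircuit inside the line L would give a 1- or 2-separation.\<close>

locale finite_matroid =
  fixes M :: "'a matroid"
  assumes matroid: "matroid M"
begin

lemma finite_ground: "finite (ground M)"
  using matroid by (simp add: matroid_def)

lemma indep_subset_ground: "indep M I \<Longrightarrow> I \<subseteq> ground M"
  using matroid by (simp add: matroid_def)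

lemma indep_empty: "indep M {}"
  using matroid by (simp add: matroid_def)

lemma indep_subset: "indep M J \<Longrightarrow> I \<subseteq> J \<Longrightarrow> indep M I"
  using matroid unfolding matroid_def by blast

lemma indep_augment:
  "indep M I \<Longrightarrow> indep M J \<Longrightarrow> card I < card J \<Longrightarrow> \<exists>e\<in>J - I. indep M (insert e I)"
  using matroid unfolding matroid_def by blast

lemma indep_finite: "indep M I \<Longrightarrow> finite I"
  using finite_ground indep_subset_ground finite_subset by blast

lemma finite_indep_subsets: "finite {I. I \<subseteq> X \<and> indep M I}"
  by (rule finite_subset[of _ "Pow (ground M)"]) (use finite_ground indep_subset_ground in auto)

lemma card_le_rank: "indep M I \<Longrightarrow> I \<subseteq> X \<Longrightarrow> card I \<le> rank M X"
  unfolding rank_def using finite_indep_subsets by (intro Max_ge) auto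

lemma rank_witness:
  obtains I where "I \<subseteq> X" "indep M I" "card I = rank M X"
proof -
  have "rank M X \<in> card ` {I. I \<subseteq> X \<and> indep M I}"
    unfolding rank_def using finite_indep_subsets indep_empty by (intro Max_in) auto
  then show ?thesis
    by (auto intro: that)
qed

lemma rank_witness_extending:
  assumes J: "indep M J" "J \<subseteq> X"
  obtains I where "J \<subseteq> I" "I \<subseteq> X" "indep M I" "card I = rank M X"
proof -
  define S where "S = {I. J \<subseteq> I \<and> I \<subseteq> X \<and> indep M I}"
  have "finite S"
    using finite_indep_subsets[of X] unfolding S_def by (rule rev_finite_subset) auto
  moreover have "J \<in> S"
    using J unfolding S_def by blast
  ultimately have "Max (card ` S) \<in> card ` S"
    by (intro Max_in) auto
  then obtain I where I: "I \<in> S" "card I = Max (card ` S)"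
    by (metis imageE)
  have I_max: "card I' \<le> card I" if "I' \<in> S" for I'
    using Max_ge[of "card ` S" "card I'"] \<open>finite S\<close> that I(2) by simp
  obtain K where K: "K \<subseteq> X" "indep M K" "card K = rank M X"
    using rank_witness .
  have "card I = rank M X"
  proof (rule ccontr)
    assume "card I \<noteq> rank M X"
    moreover have "card I \<le> rank M X"
      using I card_le_rank unfolding S_def by blast
    ultimately have "card I < card K"
      using K(3) by linarith
    then obtain e where e: "e \<in> K - I" "indep M (insert e I)"
      using indep_augment I K(2) unfolding S_def by blast
    then have "insert e I \<in> S"
      using I K(1) unfolding S_def by blast
    moreover have "card (insert e I) = card I + 1"
      using e indep_finite I unfolding S_def by auto
    ultimately show False
      using I_max[of "insert e I"] by simp
  qed
  with I show ?thesis
    unfolding S_def by (intro that) auto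
qed

lemma rank_mono:
  assumes "X \<subseteq> Y"
  shows "rank M X \<le> rank M Y"
proof -
  obtain I where "I \<subseteq> X" "indep M I" "card I = rank M X"
    using rank_witness .
  with assms show ?thesis
    using card_le_rank[of I Y] by simp
qed

lemma rank_le_card:
  assumes "finite X"
  shows "rank M X \<le> card X"
proof -
  obtain I where "I \<subseteq> X" "card I = rank M X"
    using rank_witness .
  with assms show ?thesis
    using card_mono by metis
qed

lemma rank_indep: "indep M I \<Longrightarrow> rank M I = card I"
  by (simp add: card_le_rank indep_finite le_antisym rank_le_card)

lemma indep_if_rank_eq_card:
  assumes "finite I" "rank M I = card I"
  shows "indep M I"
proof -
  obtain J where "J \<subseteq> I" "indep M J" "card J = rank M I"
    using rank_witness .
  with assms have "J = I"
    using card_subset_eq by metis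
  with \<open>indep M J\<close> show ?thesis
    by simp
qed

lemma rank_submodular: "rank M (A \<union> B) + rank M (A \<inter> B) \<le> rank M A + rank M B"
proof -
  obtain I where I: "I \<subseteq> A \<inter> B" "indep M I" "card I = rank M (A \<inter> B)"
    using rank_witness .
  then obtain J where J: "I \<subseteq> J" "J \<subseteq> A \<union> B" "indep M J" "card J = rank M (A \<union> B)"
    using rank_witness_extending[of I "A \<union> B"] by blast
  have "finite J"
    using J(3) indep_finite by blast
  have "card (J \<inter> A) \<le> rank M A" "card (J \<inter> B) \<le> rank M B"
    using J(3) by (auto intro: card_le_rank indep_subset)
  moreover have "card (J \<inter> A) + card (J \<inter> B) = card J + card (J \<inter> A \<inter> B)"
  proof -
    have "J \<inter> A \<union> J \<inter> B = J" "J \<inter> A \<inter> (J \<inter> B) = J \<inter> A \<inter> B"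
      using J(2) by blast+
    then show ?thesis
      using card_Un_Int[of "J \<inter> A" "J \<inter> B"] \<open>finite J\<close> by simp
  qed
  moreover have "card I \<le> card (J \<inter> A \<inter> B)"
    using \<open>finite J\<close> I(1) J(1) by (intro card_mono) blast+
  ultimately show ?thesis
    using I(3) J(4) by linarith
qed

lemma rank_Un_le: "rank M (A \<union> B) \<le> rank M A + rank M B"
  using rank_submodular[of A B] by linarith

lemma circuit_finite: "circuit M C \<Longrightarrow> finite C"
  unfolding circuit_def using finite_ground finite_subset by blast

lemma circuit_not_subset_indep: "circuit M Z \<Longrightarrow> indep M V \<Longrightarrow> \<not> Z \<subseteq> V"
  unfolding circuit_def using indep_subset by blast

lemma rank_circuit:
  assumes C: "circuit M C"
  shows "rank M C + 1 = card C"
proof -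
  have "finite C"
    using C circuit_finite by blast
  moreover have "C \<noteq> {}"
    using C indep_empty unfolding circuit_def by auto
  then obtain e where e: "e \<in> C"
    by blast
  moreover have "card (C - {e}) \<le> rank M C"
    using C e unfolding circuit_def by (intro card_le_rank) auto
  moreover have "rank M C \<noteq> card C"
    using C \<open>finite C\<close> indep_if_rank_eq_card unfolding circuit_def by blast
  moreover have "card (C - {e}) = card C - 1" "card C > 0"
    using \<open>finite C\<close> e card_gt_0_iff by auto
  ultimately show ?thesis
    using rank_le_card[of C] by linarith
qed

lemma indep_circuit_Int:
  assumes "circuit M C" "\<not> C \<subseteq> A"
  shows "indep M (C \<inter> A)"
proof -
  obtain e where "e \<in> C" "e \<notin> A"
    using assms(2) by blast
  then have "indep M (C - {e})" "C \<inter> A \<subseteq> C - {e}"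
    using assms(1) unfolding circuit_def by auto
  then show ?thesis
    by (rule indep_subset)
qed

lemma dependent_contains_circuit:
  "X \<subseteq> ground M \<Longrightarrow> \<not> indep M X \<Longrightarrow> \<exists>C\<subseteq>X. circuit M C"
proof (induction "card X" arbitrary: X rule: less_induct)
  case less
  show ?case
  proof (cases "\<forall>e\<in>X. indep M (X - {e})")
    case True
    with less.prems show ?thesis
      unfolding circuit_def by blast
  next
    case False
    then obtain e where e: "e \<in> X" "\<not> indep M (X - {e})"
      by blast
    have "finite X"
      using less.prems finite_ground finite_subset by blast
    with e have "card (X - {e}) < card X"
      by (meson card_Diff1_less)
    moreover have "X - {e} \<subseteq> ground M"
      using less.prems by blast
    ultimately obtain C where "C \<subseteq> X - {e}" "circuit M C"
      using less.hyps[of "X - {e}"] e(2) by blast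
    then show ?thesis
      by blast
  qed
qed

lemma simple_indep_card_le_2:
  assumes "simple M" "X \<subseteq> ground M" "card X \<le> 2"
  shows "indep M X"
proof (rule ccontr)
  assume "\<not> indep M X"
  with assms(2) obtain C where "C \<subseteq> X" "circuit M C"
    using dependent_contains_circuit by blast
  moreover have "finite X"
    using assms(2) finite_ground finite_subset by blast
  ultimately show False
    using assms card_mono[of X C] unfolding simple_def by fastforce
qed

lemma basis_if_card_eq_rank:
  assumes B: "indep M B" "card B = matroid_rank M"
  shows "basis M B"
  unfolding basis_def
proof (intro conjI allI impI)
  fix I
  assume I: "indep M I \<and> B \<subseteq> I"
  then have "card I \<le> card B"
    using B(2) card_le_rank[of I "ground M"] indep_subset_ground by simp
  with I show "I = B"
    using card_seteq[of I B] indep_finite by simp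
qed (fact B(1))

lemma card_basis:
  assumes "basis M B"
  shows "card B = matroid_rank M"
proof -
  have "indep M B"
    using assms unfolding basis_def by simp
  then obtain I where "B \<subseteq> I" "indep M I" "card I = matroid_rank M"
    using rank_witness_extending indep_subset_ground by metis
  with assms show ?thesis
    unfolding basis_def by blast
qed

lemma ex_basis: "\<exists>B. basis M B"
proof -
  obtain B where "indep M B" "card B = matroid_rank M"
    using rank_witness by metis
  then show ?thesis
    using basis_if_card_eq_rank by blast
qed

lemma cocircuit_Int_basis: "cocircuit M D \<Longrightarrow> basis M B \<Longrightarrow> D \<inter> B \<noteq> {}"
  unfolding cocircuit_def circuit_def dual_def by auto

lemma cocircuit_nonempty: "cocircuit M D \<Longrightarrow> D \<noteq> {}"
  using cocircuit_Int_basis ex_basis by blast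

lemma rank_Diff_cocircuit:
  assumes D: "cocircuit M D"
  shows "rank M (ground M - D) < matroid_rank M"
proof -
  obtain I where I: "I \<subseteq> ground M - D" "indep M I" "card I = rank M (ground M - D)"
    using rank_witness .
  then have "\<not> basis M I"
    using cocircuit_Int_basis[OF D] by blast
  then have "rank M (ground M - D) \<noteq> matroid_rank M"
    using I basis_if_card_eq_rank by auto
  moreover have "rank M (ground M - D) \<le> matroid_rank M"
    by (rule rank_mono) blast
  ultimately show ?thesis
    by linarith
qed

text \<open>If C \<inter> D = {e}, extend C - e to a maximal independent subset I of the complement of D,
  which has rank less than r(M). A basis avoiding D - e lies in that complement plus e, so I can
  be augmented from it, and the only possible new element e would make C independent.\<close>
lemma card_circuit_Int_cocircuit_ne_1:
  assumes C: "circuit M C" and D: "cocircuit M D"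
  shows "card (C \<inter> D) \<noteq> 1"
proof
  assume "card (C \<inter> D) = 1"
  then obtain e where e: "C \<inter> D = {e}"
    by (auto simp: card_1_singleton_iff)
  then have "\<exists>B. basis M B \<and> (D - {e}) \<inter> B = {}"
    using D unfolding cocircuit_def circuit_def dual_def by auto
  then obtain B where B: "basis M B" "(D - {e}) \<inter> B = {}"
    by blast
  define T where "T = ground M - D"
  have "B \<subseteq> insert e T"
    using B indep_subset_ground unfolding basis_def T_def by blast
  then have rank_eT: "matroid_rank M \<le> rank M (insert e T)"
    using B card_basis card_le_rank unfolding basis_def by metis
  have "indep M (C - {e})" "C - {e} \<subseteq> T"
    using C e unfolding circuit_def T_def by auto
  then obtain I where I: "C - {e} \<subseteq> I" "I \<subseteq> T" "indep M I" "card I = rank M T"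
    using rank_witness_extending by metis
  obtain K where K: "K \<subseteq> insert e T" "indep M K" "card K = rank M (insert e T)"
    using rank_witness .
  have "card I < card K"
    using I K rank_eT rank_Diff_cocircuit[OF D] unfolding T_def by linarith
  then obtain f where f: "f \<in> K - I" "indep M (insert f I)"
    using indep_augment I(3) K(2) by blast
  show False
  proof (cases "f \<in> T")
    case True
    then have "card (insert f I) \<le> rank M T"
      using f I card_le_rank by blast
    moreover have "card (insert f I) = card I + 1"
      using f I indep_finite by auto
    ultimately show False
      using I by linarith
  next
    case False
    with f K have "C \<subseteq> insert f I"
      using I by auto
    then show False
      using circuit_not_subset_indep[OF C f(2)] by blast
  qed
qed

lemma three_connected_rank_cocircuit_gt_2:
  assumes "three_connected M" "4 \<le> matroid_rank M" and D: "cocircuit M D"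
  shows "2 < rank M D"
proof (rule ccontr)
  assume "\<not> 2 < rank M D"
  then have rank_D: "rank M D \<le> 2"
    by simp
  let ?E = "ground M"
  have "D \<subseteq> ?E"
    using D unfolding cocircuit_def circuit_def dual_def by simp
  then have "finite D" "finite (?E - D)"
    using finite_ground finite_subset by blast+
  have "card D \<ge> 1"
    using cocircuit_nonempty[OF D] \<open>finite D\<close> by (simp add: Suc_leI card_gt_0_iff)
  have "D \<union> (?E - D) = ?E"
    using \<open>D \<subseteq> ?E\<close> by blast
  then have rank_split: "matroid_rank M \<le> rank M D + rank M (?E - D)"
    using rank_Un_le[of D "?E - D"] by simp
  then have "card (?E - D) \<ge> 2"
    using assms(2) rank_D rank_le_card[OF \<open>finite (?E - D)\<close>] by linarith
  have conn_D: "conn M D < rank M D"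
    using rank_Diff_cocircuit[OF D] rank_split unfolding conn_def by linarith
  show False
  proof (cases "card D = 1")
    case True
    then have "separation M 1 D"
      using conn_D rank_le_card[OF \<open>finite D\<close>] \<open>D \<subseteq> ?E\<close> \<open>card (?E - D) \<ge> 2\<close>
      unfolding separation_def by simp
    with assms(1) show False
      unfolding three_connected_def by simp
  next
    case False
    then have "separation M 2 D"
      using conn_D rank_D \<open>card D \<ge> 1\<close> \<open>D \<subseteq> ?E\<close> \<open>card (?E - D) \<ge> 2\<close>
      unfolding separation_def by simp
    with assms(1) show False
      unfolding three_connected_def by simp
  qed
qed

lemma circuit_contract_iff:
  "circuit (contract M L) C \<longleftrightarrow>
     C \<subseteq> ground M - L \<and> rank M (C \<union> L) \<noteq> card C + rank M L \<and>
     (\<forall>e\<in>C. rank M (C - {e} \<union> L) = card (C - {e}) + rank M L)"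
  unfolding circuit_def contract_def by auto

lemma circuit_contract_lift:
  assumes C: "circuit (contract M L) C" and T: "T \<subseteq> L" "indep M T" "card T = rank M L"
  obtains Z where "circuit M Z" "C \<subseteq> Z" "Z \<subseteq> C \<union> T"
proof -
  have C_ground: "C \<subseteq> ground M - L"
    and rank_CL: "rank M (C \<union> L) \<noteq> card C + rank M L"
    and rank_CeL: "\<And>e. e \<in> C \<Longrightarrow> rank M (C - {e} \<union> L) = card (C - {e}) + rank M L"
    using C by (auto simp: circuit_contract_iff)
  have "finite C" "finite T"
    using C_ground finite_ground finite_subset T(2) indep_finite by blast+
  have disj: "\<And>A. A \<subseteq> C \<Longrightarrow> card (A \<union> T) = card A + card T"
    using C_ground T(1) \<open>finite C\<close> \<open>finite T\<close>
    by (intro card_Un_disjoint) (auto intro: finite_subset)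
  have "rank M (C \<union> L) \<le> card C + rank M L"
    using rank_Un_le[of C L] rank_le_card[OF \<open>finite C\<close>] by linarith
  moreover have "rank M (C \<union> T) \<le> rank M (C \<union> L)"
    using T(1) by (intro rank_mono) blast
  ultimately have "rank M (C \<union> T) \<noteq> card (C \<union> T)"
    using rank_CL disj[of C] T(3) by simp
  then have "\<not> indep M (C \<union> T)"
    using rank_indep by blast
  moreover have "C \<union> T \<subseteq> ground M"
    using C_ground T(2) indep_subset_ground by blast
  ultimately obtain Z where Z: "Z \<subseteq> C \<union> T" "circuit M Z"
    using dependent_contains_circuit[of "C \<union> T"] by blast
  have "C \<subseteq> Z"
  proof
    fix e
    assume e: "e \<in> C"
    define V where "V = C - {e} \<union> T"
    have "V \<union> L = C - {e} \<union> L" "V \<inter> L = T"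
      unfolding V_def using C_ground T(1) by auto
    then have "rank M (C - {e} \<union> L) + card T \<le> rank M V + rank M L"
      using rank_submodular[of V L] rank_indep[OF T(2)] by simp
    then have "card V \<le> rank M V"
      using rank_CeL[OF e] disj[of "C - {e}"] unfolding V_def by simp
    then have "indep M V"
      using rank_le_card[of V] indep_if_rank_eq_card[of V] \<open>finite C\<close> \<open>finite T\<close>
      unfolding V_def by simp
    then have "\<not> Z \<subseteq> V"
      using circuit_not_subset_indep Z(2) by blast
    then show "e \<in> Z"
      using Z(1) unfolding V_def by blast
  qed
  with Z show ?thesis
    by (intro that)
qed

lemma rank_circuit_Un_less:
  assumes C: "circuit M C" "\<not> C \<subseteq> L"
  shows "rank M (C \<union> L) < card (C - L) + rank M L"
proof -
  have "rank M (C \<inter> L) = card (C \<inter> L)"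
    using rank_indep indep_circuit_Int C by blast
  moreover have "card C = card (C \<inter> L) + card (C - L)"
    using card_Int_Diff circuit_finite C(1) by blast
  ultimately show ?thesis
    using rank_submodular[of C L] rank_circuit[OF C(1)] by linarith
qed

lemma carambole_hull_not_in_filament:
  assumes "three_connected M" "4 \<le> matroid_rank M" "carambole M n x y" "i \<in> {1..n}"
  shows "x i \<notin> y ` {1..n}"
proof
  let ?L = "y ` {1..n}"
  let ?D = "?L - {y i} \<union> {x i}"
  assume "x i \<in> ?L"
  then have "rank M ?D \<le> rank M ?L"
    by (intro rank_mono) blast
  moreover have "cocircuit M ?D" "rank M ?L = 2"
    using assms(3,4) unfolding carambole_def line_def by blast+
  ultimately show False
    using three_connected_rank_cocircuit_gt_2[OF assms(1,2)] by fastforce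
qed

end

lemma subset_image_pair:
  assumes "A \<subseteq> f ` I" "card A \<le> 2" "finite I" "2 \<le> card I"
  shows "\<exists>i\<in>I. \<exists>j\<in>I. i \<noteq> j \<and> A \<subseteq> {f i, f j}"
proof -
  obtain B where B: "B \<subseteq> I" "inj_on f B" "A = f ` B"
    using assms(1) unfolding subset_image_inj by blast
  then have "card B \<le> 2"
    using assms(2) card_image[OF B(2)] by simp
  then obtain P where P: "B \<subseteq> P" "P \<subseteq> I" "card P = 2"
    using exists_subset_between[of B 2 I] assms(3,4) B(1) by blast
  then obtain i j where "P = {i, j}" "i \<noteq> j"
    by (auto simp: card_2_iff)
  with P B(3) show ?thesis
    by blast
qed

locale carambole_matroid = finite_matroid +
  fixes n :: nat and x y :: "nat \<Rightarrow> 'a"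
  assumes carambole: "carambole M n x y"
    and hull_not_in_filament: "i \<in> {1..n} \<Longrightarrow> x i \<notin> y ` {1..n}"
    \<comment> \<open>holds in a 3-connected matroid of rank at least 4: carambole_hull_not_in_filament\<close>
begin

definition filament :: "'a set" where
  "filament = y ` {1..n}"

definition hull :: "'a set" where
  "hull = x ` {1..n}"

lemma three_le_n: "3 \<le> n"
  using carambole unfolding carambole_def by blast

lemma y_eq_iff: "i \<in> {1..n} \<Longrightarrow> j \<in> {1..n} \<Longrightarrow> y i = y j \<longleftrightarrow> i = j"
  using carambole inj_on_eq_iff unfolding carambole_def by metis

lemma y_mem_filament: "i \<in> {1..n} \<Longrightarrow> y i \<in> filament"
  unfolding filament_def by blast

lemma mem_filament_E:
  assumes "p \<in> filament"
  obtains i where "i \<in> {1..n}" "p = y i"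
  using assms unfolding filament_def by blast

lemma x_notin_filament: "i \<in> {1..n} \<Longrightarrow> x i \<notin> filament"
  unfolding filament_def by (rule hull_not_in_filament)

lemma filament_subset_ground: "filament \<subseteq> ground M"
  using carambole unfolding carambole_def line_def filament_def by blast

lemma rank_filament: "rank M filament = 2"
  using carambole unfolding carambole_def line_def filament_def by blast

lemma cocircuit_filament_exchange: "i \<in> {1..n} \<Longrightarrow> cocircuit M (filament - {y i} \<union> {x i})"
  using carambole unfolding carambole_def filament_def by blast

lemma hull_point_notin_circuit:
  assumes "circuit M Z" "i \<in> {1..n}" "Z \<inter> filament \<subseteq> {y i}"
  shows "x i \<notin> Z"
proof
  assume "x i \<in> Z"
  with assms(3) have "Z \<inter> (filament - {y i} \<union> {x i}) = {x i}"
    by blast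
  then show False
    using card_circuit_Int_cocircuit_ne_1[OF assms(1) cocircuit_filament_exchange[OF assms(2)]] by simp
qed

lemma circuit_Int_filament_ne_singleton:
  assumes "circuit M Z" "i \<in> {1..n}" "x i \<notin> Z"
  shows "Z \<inter> (filament - {y i}) \<noteq> {q}"
proof
  assume "Z \<inter> (filament - {y i}) = {q}"
  with assms(3) have "Z \<inter> (filament - {y i} \<union> {x i}) = {q}"
    by blast
  then show False
    using card_circuit_Int_cocircuit_ne_1[OF assms(1) cocircuit_filament_exchange[OF assms(2)]] by simp
qed

lemma hull_point_mem_circuit:
  assumes "circuit M Z" "l \<in> {1..n}" "Z \<inter> filament = {y l}" "i \<in> {1..n}" "i \<noteq> l"
  shows "x i \<in> Z"
proof (rule ccontr)
  assume "x i \<notin> Z"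
  have "y i \<noteq> y l"
    using assms(2,4,5) y_eq_iff by blast
  with assms(3) have "Z \<inter> (filament - {y i}) = {y l}"
    by blast
  then show False
    using circuit_Int_filament_ne_singleton[OF assms(1,4) \<open>x i \<notin> Z\<close>] by blast
qed

lemma circuit_Int_filament_nonempty:
  assumes "circuit M C" "C \<inter> hull \<noteq> {}"
  shows "C \<inter> filament \<noteq> {}"
proof
  assume "C \<inter> filament = {}"
  obtain i where "i \<in> {1..n}" "x i \<in> C"
    using assms(2) unfolding hull_def by blast
  with \<open>C \<inter> filament = {}\<close> show False
    using hull_point_notin_circuit[OF assms(1)] by blast
qed

lemma filament_pair_point_mem_circuit:
  assumes C: "circuit M C" and Z: "circuit M Z"
    and ij: "i \<in> {1..n}" "j \<in> {1..n}" "i \<noteq> j"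
    and C_filament: "C \<inter> filament \<subseteq> {y i, y j}" and Z_sub: "Z \<subseteq> C \<union> {y i, y j}"
    and "y j \<in> Z"
  shows "y j \<in> C"
proof (rule ccontr)
  assume "y j \<notin> C"
  have filament_ij: "y i \<in> filament" "y j \<in> filament" "y i \<noteq> y j"
    using ij y_mem_filament y_eq_iff by blast+
  have "C \<inter> filament \<subseteq> {y i}"
    using C_filament \<open>y j \<notin> C\<close> by blast
  then have "x i \<notin> C"
    by (rule hull_point_notin_circuit[OF C ij(1)])
  then have "x i \<notin> Z"
    using Z_sub filament_ij x_notin_filament[OF ij(1)] by auto
  have "Z \<inter> filament \<subseteq> {y i, y j}"
    using Z_sub C_filament by blast
  then have "Z \<inter> (filament - {y i}) = {y j}"
    using filament_ij \<open>y j \<in> Z\<close> by blast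
  then show False
    using circuit_Int_filament_ne_singleton[OF Z ij(1) \<open>x i \<notin> Z\<close>] by blast
qed

lemma indep_circuit_Diff_filament_Un_pair:
  assumes C: "circuit M C" and e: "e \<in> C - filament"
    and ij: "i \<in> {1..n}" "j \<in> {1..n}" "i \<noteq> j" and C_filament: "C \<inter> filament \<subseteq> {y i, y j}"
  shows "indep M (C - filament - {e} \<union> {y i, y j})"
proof (rule ccontr)
  let ?V = "C - filament - {e} \<union> {y i, y j}"
  assume "\<not> indep M ?V"
  moreover have "?V \<subseteq> ground M"
    using C filament_subset_ground ij y_mem_filament unfolding circuit_def by blast
  ultimately obtain Z where Z: "Z \<subseteq> ?V" "circuit M Z"
    using dependent_contains_circuit[of ?V] by blast
  then have "Z \<subseteq> C \<union> {y i, y j}" "Z \<subseteq> C \<union> {y j, y i}"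
    by blast+
  moreover have "C \<inter> filament \<subseteq> {y j, y i}"
    using C_filament by blast
  ultimately have "y i \<in> Z \<Longrightarrow> y i \<in> C" "y j \<in> Z \<Longrightarrow> y j \<in> C"
    using filament_pair_point_mem_circuit[OF C Z(2) ij(2,1) ij(3)[symmetric]]
      filament_pair_point_mem_circuit[OF C Z(2) ij C_filament] by blast+
  moreover have "y i \<in> filament" "y j \<in> filament"
    using ij y_mem_filament by blast+
  ultimately have "Z \<subseteq> C - {e}"
    using Z(1) e by blast
  moreover have "indep M (C - {e})"
    using C e unfolding circuit_def by blast
  ultimately show False
    using circuit_not_subset_indep[OF Z(2)] by blast
qed

lemma circuit_Int_filament_subset_pair:
  assumes C: "circuit M C" "\<not> C \<subseteq> filament"
  obtains i j where "i \<in> {1..n}" "j \<in> {1..n}" "i \<noteq> j" "C \<inter> filament \<subseteq> {y i, y j}"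
proof -
  have "card (C \<inter> filament) \<le> 2"
    using rank_indep[OF indep_circuit_Int[OF C]] rank_mono[of "C \<inter> filament" filament] rank_filament
    by simp
  moreover have "2 \<le> card {1..n}"
    using three_le_n by simp
  moreover have "C \<inter> filament \<subseteq> y ` {1..n}"
    unfolding filament_def by blast
  ultimately obtain i j where "i \<in> {1..n}" "j \<in> {1..n}" "i \<noteq> j" "C \<inter> filament \<subseteq> {y i, y j}"
    using subset_image_pair[of "C \<inter> filament" y "{1..n}"] by auto
  then show ?thesis
    by (rule that)
qed

lemma rank_circuit_Diff_filament_Un_filament:
  assumes C: "circuit M C" "\<not> C \<subseteq> filament" and e: "e \<in> C - filament"
  shows "rank M (C - filament - {e} \<union> filament) = card (C - filament - {e}) + rank M filament"
proof -
  let ?J = "C - filament - {e}"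
  obtain i j where ij: "i \<in> {1..n}" "j \<in> {1..n}" "i \<noteq> j" "C \<inter> filament \<subseteq> {y i, y j}"
    using circuit_Int_filament_subset_pair[OF C] .
  have "finite ?J"
    using circuit_finite C(1) by blast
  moreover have filament_ij: "y i \<in> filament" "y j \<in> filament" "y i \<noteq> y j"
    using ij y_mem_filament y_eq_iff by blast+
  ultimately have "card (?J \<union> {y i, y j}) = card ?J + 2"
    by (subst card_Un_disjoint) auto
  moreover have "indep M (?J \<union> {y i, y j})"
    using indep_circuit_Diff_filament_Un_pair[OF C(1) e ij] .
  moreover have "?J \<union> {y i, y j} \<subseteq> ?J \<union> filament"
    using filament_ij by blast
  ultimately have "card ?J + 2 \<le> rank M (?J \<union> filament)"
    using card_le_rank[of "?J \<union> {y i, y j}"] by simp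
  moreover have "rank M (?J \<union> filament) \<le> card ?J + 2"
    using rank_Un_le[of ?J filament] rank_le_card[OF \<open>finite ?J\<close>] rank_filament by linarith
  ultimately show ?thesis
    using rank_filament by simp
qed

lemma circuit_contract_filament:
  assumes C: "circuit M C" "\<not> C \<subseteq> filament"
  shows "circuit (contract M filament) (C - filament)"
  unfolding circuit_contract_iff
proof (intro conjI ballI)
  show "C - filament \<subseteq> ground M - filament"
    using C unfolding circuit_def by blast
  show "rank M (C - filament \<union> filament) \<noteq> card (C - filament) + rank M filament"
    using rank_circuit_Un_less[OF C] by simp
next
  fix e
  assume "e \<in> C - filament"
  then show "rank M (C - filament - {e} \<union> filament) = card (C - filament - {e}) + rank M filament"
    using rank_circuit_Diff_filament_Un_filament[OF C] by blast
qed

lemma circuit_Diff_filament_Un_pair_cases: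
  assumes "simple M" and C: "circuit M C" "\<not> C \<subseteq> filament" "C \<inter> filament \<noteq> {}"
    and pq: "p \<in> filament" "q \<in> filament" "p \<noteq> q"
  shows "circuit M (C - filament \<union> {p, q}) \<or> circuit M (C - filament \<union> {p}) \<or>
    circuit M (C - filament \<union> {q})"
proof -
  have card_pq: "card {p, q} = rank M filament"
    using pq rank_filament by simp
  have pq_filament: "{p, q} \<subseteq> filament"
    using pq by blast
  then have "{p, q} \<subseteq> ground M"
    using filament_subset_ground by blast
  then have "indep M {p, q}"
    using simple_indep_card_le_2[OF assms(1)] card_pq rank_filament by simp
  then obtain Z where Z: "circuit M Z" "C - filament \<subseteq> Z" "Z \<subseteq> C - filament \<union> {p, q}"
    using circuit_contract_lift[OF circuit_contract_filament[OF C(1,2)] pq_filament _ card_pq] by blast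
  obtain s where s: "s \<in> C" "s \<in> filament"
    using C(3) by blast
  then have "indep M (C - {s})"
    using C(1) unfolding circuit_def by blast
  then have "indep M (C - filament)"
    by (rule indep_subset) (use s in blast)
  then have "Z \<inter> {p, q} \<noteq> {}"
    using circuit_not_subset_indep[OF Z(1)] Z(3) by blast
  moreover have "Z = C - filament \<union> (Z \<inter> {p, q})"
    using Z(2,3) by blast
  ultimately show ?thesis
    using Z(1) by (cases "p \<in> Z"; cases "q \<in> Z") auto
qed

lemma circuit_Diff_filament_Un_pair_if_hull_subset:
  assumes "simple M" and C: "circuit M C" "\<not> C \<subseteq> filament" "hull \<subseteq> C"
    and A: "A \<subseteq> filament" "card A = 2"
  shows "circuit M (C - filament \<union> A)"
proof -
  have "x 1 \<in> C \<inter> hull"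
    using three_le_n C(3) unfolding hull_def by auto
  then have "C \<inter> filament \<noteq> {}"
    using circuit_Int_filament_nonempty[OF C(1)] by blast
  have no_single: "\<not> circuit M (C - filament \<union> {p})" if "p \<in> filament" for p
  proof
    assume circ: "circuit M (C - filament \<union> {p})"
    obtain m where m: "m \<in> {1..n}" "p = y m"
      using \<open>p \<in> filament\<close> by (rule mem_filament_E)
    then have "x m \<in> C - filament \<union> {p}"
      using C(3) x_notin_filament unfolding hull_def by blast
    moreover have "(C - filament \<union> {p}) \<inter> filament \<subseteq> {y m}"
      using m by blast
    ultimately show False
      using hull_point_notin_circuit[OF circ m(1)] by blast
  qed
  obtain p q where "A = {p, q}" "p \<noteq> q"
    using A(2) by (auto simp: card_2_iff)
  with A(1) show ?thesis
    using circuit_Diff_filament_Un_pair_cases[OF assms(1) C(1,2) \<open>C \<inter> filament \<noteq> {}\<close>] no_single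
    by blast
qed

lemma circuit_Diff_filament_Un_if_hull_point_notin:
  assumes "simple M" and C: "circuit M C" "\<not> C \<subseteq> filament" "C \<inter> filament \<noteq> {}"
    and l: "l \<in> {1..n}" "x l \<notin> C"
  shows "hull - C = {x l}" "circuit M (C - filament \<union> {y l})"
    "\<forall>A. A \<subseteq> filament - {y l} \<and> card A = 2 \<longrightarrow> circuit M (C - filament \<union> A)"
proof -
  let ?K = "C - filament"
  have off_l: "T - {y l} \<noteq> {q}" if "T \<subseteq> filament" "circuit M (?K \<union> T)" for T q
  proof -
    have "(?K \<union> T) \<inter> (filament - {y l}) = T - {y l}"
      using \<open>T \<subseteq> filament\<close> by blast
    moreover have "x l \<notin> ?K \<union> T"
      using l x_notin_filament \<open>T \<subseteq> filament\<close> by blast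
    ultimately show ?thesis
      using circuit_Int_filament_ne_singleton[OF \<open>circuit M (?K \<union> T)\<close> l(1)] by simp
  qed
  have no_single: "\<not> circuit M (?K \<union> {p})" if "p \<in> filament - {y l}" for p
    using off_l[of "{p}" p] that by auto
  define k where "k = (if l = 1 then 2 else 1 :: nat)"
  have k: "k \<in> {1..n}" "y k \<noteq> y l"
    using three_le_n l(1) y_eq_iff unfolding k_def by auto
  have "{y l, y k} - {y l} = {y k}" "{y l, y k} \<subseteq> filament"
    using k l(1) y_mem_filament by auto
  then have "\<not> circuit M (?K \<union> {y l, y k})"
    using off_l[of "{y l, y k}" "y k"] by blast
  moreover have "y k \<in> filament - {y l}"
    using k y_mem_filament by blast
  ultimately show circ_l: "circuit M (?K \<union> {y l})"
    using circuit_Diff_filament_Un_pair_cases[OF assms(1) C y_mem_filament[OF l(1)], of "y k"] k(2)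
      no_single[of "y k"] by auto
  have "(?K \<union> {y l}) \<inter> filament = {y l}"
    using y_mem_filament[OF l(1)] by blast
  then have hull_in_C: "x i \<in> C" if "i \<in> {1..n}" "i \<noteq> l" for i
    using hull_point_mem_circuit[OF circ_l l(1) _ that] x_notin_filament[OF that(1)]
      y_mem_filament[OF l(1)] by auto
  show "hull - C = {x l}"
  proof
    show "hull - C \<subseteq> {x l}"
      unfolding hull_def using hull_in_C by blast
    show "{x l} \<subseteq> hull - C"
      unfolding hull_def using l by blast
  qed
  show "\<forall>A. A \<subseteq> filament - {y l} \<and> card A = 2 \<longrightarrow> circuit M (?K \<union> A)"
  proof (intro allI impI)
    fix A
    assume A: "A \<subseteq> filament - {y l} \<and> card A = 2"
    then obtain p q where "A = {p, q}" "p \<noteq> q"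
      by (auto simp: card_2_iff)
    with A show "circuit M (?K \<union> A)"
      using circuit_Diff_filament_Un_pair_cases[OF assms(1) C, of p q] no_single by blast
  qed
qed

lemma circuit_Diff_filament_cases:
  assumes "simple M" and C: "circuit M C" "\<not> C \<subseteq> filament"
  shows "C \<inter> (hull \<union> filament) \<noteq> {} \<longrightarrow>
    (hull \<subseteq> C \<and> (\<forall>A. A \<subseteq> filament \<and> card A = 2 \<longrightarrow> circuit M (C - filament \<union> A))) \<or>
    (\<exists>l\<in>{1..n}. hull - C = {x l} \<and> circuit M (C - filament \<union> {y l}) \<and>
      (\<forall>A. A \<subseteq> filament - {y l} \<and> card A = 2 \<longrightarrow> circuit M (C - filament \<union> A)))"
proof (intro impI)
  assume meets: "C \<inter> (hull \<union> filament) \<noteq> {}"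
  show "(hull \<subseteq> C \<and> (\<forall>A. A \<subseteq> filament \<and> card A = 2 \<longrightarrow> circuit M (C - filament \<union> A))) \<or>
    (\<exists>l\<in>{1..n}. hull - C = {x l} \<and> circuit M (C - filament \<union> {y l}) \<and>
      (\<forall>A. A \<subseteq> filament - {y l} \<and> card A = 2 \<longrightarrow> circuit M (C - filament \<union> A)))"
  proof (cases "hull \<subseteq> C")
    case True
    then show ?thesis
      using circuit_Diff_filament_Un_pair_if_hull_subset[OF assms(1) C] by blast
  next
    case False
    then obtain l where l: "l \<in> {1..n}" "x l \<notin> C"
      unfolding hull_def by blast
    have "C \<inter> filament \<noteq> {}"
      using meets circuit_Int_filament_nonempty[OF C(1)] by blast
    then show ?thesis
      using circuit_Diff_filament_Un_if_hull_point_notin[OF assms(1) C _ l] l(1) by blast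
  qed
qed

end

theorem proposition4p2:
  fixes M :: "'a matroid" and n :: nat and x y :: "nat \<Rightarrow> 'a" and C :: "'a set"
  assumes "matroid M"
    and "three_connected M"
    and "simple M"
    and "matroid_rank M \<ge> 4"
    and "carambole M n x y"
    and "circuit M C"
    and "\<not> C \<subseteq> y ` {1..n}"
  shows "(C \<inter> (x ` {1..n} \<union> y ` {1..n}) \<noteq> {} \<longrightarrow>
           ((x ` {1..n} \<subseteq> C \<and>
              (\<forall>A. A \<subseteq> y ` {1..n} \<and> card A = 2 \<longrightarrow>
                   circuit M ((C - y ` {1..n}) \<union> A)))
            \<or>
            (\<exists>l \<in> {1..n}. x ` {1..n} - C = {x l} \<and>
                circuit M ((C - y ` {1..n}) \<union> {y l}) \<and>
                (\<forall>A. A \<subseteq> y ` {1..n} - {y l} \<and> card A = 2 \<longrightarrow>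
                   circuit M ((C - y ` {1..n}) \<union> A)))))
         \<and> circuit (contract M (y ` {1..n})) (C - y ` {1..n})"
proof -
  interpret finite_matroid M
    using assms(1) by unfold_locales
  interpret carambole_matroid M n x y
    using assms(2,4,5) carambole_hull_not_in_filament by unfold_locales blast+
  have C: "circuit M C" "\<not> C \<subseteq> filament"
    using assms(6,7) unfolding filament_def by blast+
  show ?thesis
    using circuit_Diff_filament_cases[OF assms(3) C] circuit_contract_filament[OF C]
    unfolding filament_def hull_def by (rule conjI)
qed

end
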